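(* Let $(\Omega,\mathcal F)$ be a measurable space with $\Sigma\neq\emptyset$, $\nu$ a finite measure, and $\mu$ a finite measure with $\mu\ll\nu$. Let $F_\mu(y)=\nu(\{\omega:\frac{d\mu}{d\nu}(\omega)\le y\})$ and $v_\mu(A)=\int_0^\infty\min(\nu(\Omega)-F_\mu(z),\nu(A))\,dz$. For a non-negative measurable $f:\Omega\to[0,\infty)$ let $F_f(z)=\nu(\{\omega:f(\omega)\le z\})$ ($z\ge0$). Then $$v_\mu(f)=\int_0^{\nu(\Omega)}F_\mu^{-1}(\beta)\,F_f^{-1}(\beta)\,d\beta,$$ where $v_\mu(f)=\int_0^\infty v_\mu(\{\omega:f(\omega)>z\})\,dz$ and, for $F\in\{F_\mu,F_f\}$, $F^{-1}(\beta)=\inf\{z\ge0:F(z)>\beta\}$.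
   Context: $\Sigma$ denotes the set of all classes $\mathcal I\subset\mathcal F$ that are chains (totally ordered by inclusion), contain $\emptyset$ and $\Omega$, and generate $\mathcal F$ as a $\sigma$-algebra. $\frac{d\mu}{d\nu}$ is the non-negative Radon–Nikodym derivative. *)

theory Defs
  imports "HOL-Probability.Probability"
begin

definition chain_generators :: "'a measure \<Rightarrow> 'a set set set" where
  "chain_generators M = {I. I \<subseteq> sets M \<and> (\<forall>A\<in>I. \<forall>B\<in>I. A \<subseteq> B \<or> B \<subseteq> A)
      \<and> {} \<in> I \<and> space M \<in> I \<and> sigma_sets (space M) I = sets M}"

definition distF_rn :: "'a measure \<Rightarrow> 'a measure \<Rightarrow> real \<Rightarrow> real" where
  "distF_rn \<nu> \<mu> y = measure \<nu> {\<omega> \<in> space \<nu>. RN_deriv \<nu> \<mu> \<omega> \<le> ennreal y}"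

definition distF_fun :: "'a measure \<Rightarrow> ('a \<Rightarrow> real) \<Rightarrow> real \<Rightarrow> real" where
  "distF_fun \<nu> f z = measure \<nu> {\<omega> \<in> space \<nu>. f \<omega> \<le> z}"

text \<open>Generalised inverse F^{-1}(beta) = inf {z >= 0 : F(z) > beta}, taken in [0,infinity] (inf of empty set = infinity).\<close>
definition qinv :: "(real \<Rightarrow> real) \<Rightarrow> real \<Rightarrow> ennreal" where
  "qinv F \<beta> = Inf (ennreal ` {z. 0 \<le> z \<and> F z > \<beta>})"

definition v_set :: "'a measure \<Rightarrow> 'a measure \<Rightarrow> 'a set \<Rightarrow> ennreal" where
  "v_set \<nu> \<mu> A = (\<integral>\<^sup>+ z. indicator {0..} z *
      ennreal (min (measure \<nu> (space \<nu>) - distF_rn \<nu> \<mu> z) (measure \<nu> A)) \<partial>lborel)"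

definition v_fun :: "'a measure \<Rightarrow> 'a measure \<Rightarrow> ('a \<Rightarrow> real) \<Rightarrow> ennreal" where
  "v_fun \<nu> \<mu> f = (\<integral>\<^sup>+ z. indicator {0..} z * v_set \<nu> \<mu> {\<omega> \<in> space \<nu>. f \<omega> > z} \<partial>lborel)"

end

(*
  Write G for the quantile function of F_mu and N = nu(Omega).  Because F_mu is monotone and
  right-continuous, for t >= 0 the set {beta : G(beta) > t} is the half-line above F_mu(t) up to
  its endpoint, so min(N - F_mu(t), nu{f > z}) = N - max(F_f(z), F_mu(t)) is the Lebesgue measure
  of {beta in [F_f(z), N] : G(beta) > t}.  Integrating over t and swapping the integrals (Tonelli)
  gives v_mu({f > z}) = int_{F_f(z)}^N G.  Swapping once more, the z-section
  {z >= 0 : F_f(z) <= beta} has Lebesgue measure F_f^{-1}(beta), which yields the claim.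
*)

theory Submission imports Defs begin

lemma mono_imp_borel_measurable:
  fixes G :: "real \<Rightarrow> 'b::{linorder_topology, second_countable_topology}"
  assumes "mono G"
  shows "G \<in> borel_measurable borel"
proof (rule borel_measurableI_greater)
  fix y
  have "is_interval {x. y < G x}"
    unfolding is_interval_1 using assms by (auto simp: mono_def intro: less_le_trans)
  then show "{x \<in> space borel. y < G x} \<in> sets borel"
    using real_interval_borel_measurable by simp
qed

lemma mono_qinv: "mono (qinv F)"
  unfolding mono_def qinv_def by (auto intro!: Inf_superset_mono)

lemma borel_measurable_qinv[measurable]: "qinv F \<in> borel_measurable borel"
  by (rule mono_imp_borel_measurable[OF mono_qinv])

lemma emeasure_lborel_atLeast_0: "emeasure lborel {0::real..} = \<infinity>"
proof -
  have "of_nat n \<le> emeasure lborel {0::real..}" for n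
    using emeasure_mono[of "{0..real n}" "{0::real..}" lborel]
    by (auto simp: ennreal_of_nat_eq_real_of_nat)
  then have "(SUP n. of_nat n :: ennreal) \<le> emeasure lborel {0::real..}"
    by (intro SUP_least) auto
  then show ?thesis by (simp add: ennreal_SUP_of_nat_eq_top top_unique)
qed

lemma emeasure_lborel_ennreal_less: "emeasure lborel {t. 0 \<le> t \<and> ennreal t < x} = x"
proof (cases x)
  case (real r)
  then have "{t. 0 \<le> t \<and> ennreal t < x} = {0..<r}"
    by (auto simp: ennreal_less_iff)
  then show ?thesis using real by simp
next
  case top
  then have "{t. 0 \<le> t \<and> ennreal t < x} = {0..}" by auto
  then show ?thesis using top by (simp add: emeasure_lborel_atLeast_0)
qed

lemma emeasure_lborel_eq_between:
  fixes a b :: real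
  assumes "{a<..<b} \<subseteq> S" "S \<subseteq> {a..b}" "S \<in> sets lborel"
  shows "emeasure lborel S = ennreal (b - a)"
proof (cases "a \<le> b")
  case True
  show ?thesis
    using True emeasure_mono[OF assms(1,3)] emeasure_mono[OF assms(2), of lborel]
    by (intro antisym) simp_all
next
  case False
  then show ?thesis using assms(2) by (simp add: ennreal_neg)
qed

lemma qinv_eq_top:
  assumes "\<forall>z\<ge>0. F z \<le> \<beta>"
  shows "qinv F \<beta> = \<infinity>"
  using assms unfolding qinv_def by (auto simp: not_less)

lemma qinv_eq_Inf:
  assumes "\<exists>z\<ge>0. \<beta> < F z"
  shows "qinv F \<beta> = ennreal (Inf {z. 0 \<le> z \<and> \<beta> < F z})"
  unfolding qinv_def using assms
  by (intro continuous_at_Inf_mono[symmetric])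
    (auto simp: mono_def ennreal_leI bdd_below_def continuous_at_imp_continuous_at_within)

lemma emeasure_sublevel_eq_qinv:
  fixes F :: "real \<Rightarrow> real"
  assumes "mono F"
  shows "emeasure lborel {z. 0 \<le> z \<and> F z \<le> \<beta>} = qinv F \<beta>"
proof (cases "\<exists>z\<ge>0. \<beta> < F z")
  case False
  then have "{z. 0 \<le> z \<and> F z \<le> \<beta>} = {0..}" by auto
  with False show ?thesis by (simp add: qinv_eq_top not_less emeasure_lborel_atLeast_0)
next
  case True
  define T where "T = {z. 0 \<le> z \<and> \<beta> < F z}"
  define w where "w = Inf T"
  have "T \<noteq> {}" "bdd_below T" using True by (auto simp: T_def bdd_below_def)
  have below_w: "z \<le> w" if "0 \<le> z" "F z \<le> \<beta>" for z
  proof (rule ccontr)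
    assume "\<not> z \<le> w"
    then obtain z' where "z' \<in> T" "z' < z"
      using cInf_less_iff[OF \<open>T \<noteq> {}\<close> \<open>bdd_below T\<close>, of z] by (auto simp: w_def)
    with that monoD[OF assms, of z' z] show False by (auto simp: T_def)
  qed
  have "F z \<le> \<beta>" if "0 \<le> z" "z < w" for z
  proof (rule ccontr)
    assume "\<not> F z \<le> \<beta>"
    with that have "z \<in> T" by (simp add: T_def)
    with \<open>z < w\<close> cInf_lower[OF _ \<open>bdd_below T\<close>] show False by (force simp: w_def)
  qed
  then have "{0<..<w} \<subseteq> {z. 0 \<le> z \<and> F z \<le> \<beta>}" by auto
  moreover have "{z. 0 \<le> z \<and> F z \<le> \<beta>} \<subseteq> {0..w}"
    using below_w by auto
  moreover have "{z. 0 \<le> z \<and> F z \<le> \<beta>} \<in> sets lborel"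
    using borel_measurable_mono[OF assms] by measurable
  ultimately show ?thesis
    using emeasure_lborel_eq_between qinv_eq_Inf[OF True] by (simp add: w_def T_def)
qed

lemma less_qinv_if_less:
  assumes "mono F" "continuous (at_right t) F" "0 \<le> t" "F t < \<beta>"
  shows "ennreal t < qinv F \<beta>"
proof -
  have "\<forall>\<^sub>F y in at_right t. t < y \<and> F y < \<beta>"
    using assms(2,4) unfolding continuous_within
    by (intro eventually_conj eventually_at_right_less order_tendstoD(2))
  then obtain y where "t < y" "F y < \<beta>"
    using eventually_happens'[OF trivial_limit_at_right_real] by blast
  have "ennreal y \<le> qinv F \<beta>"
    unfolding qinv_def
  proof (rule Inf_greatest, clarify)
    fix z assume "0 \<le> z" "\<beta> < F z"
    with \<open>F y < \<beta>\<close> monoD[OF assms(1), of z y] show "ennreal y \<le> ennreal z"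
      by (force intro: ennreal_leI)
  qed
  moreover have "ennreal t < ennreal y"
    using \<open>t < y\<close> \<open>0 \<le> t\<close> by (simp add: ennreal_less_iff)
  ultimately show ?thesis by (rule order.strict_trans2[rotated])
qed

lemma le_if_less_qinv:
  assumes "0 \<le> t" "ennreal t < qinv F \<beta>"
  shows "F t \<le> \<beta>"
proof (rule ccontr)
  assume "\<not> F t \<le> \<beta>"
  then have "qinv F \<beta> \<le> ennreal t"
    unfolding qinv_def using assms(1) by (auto intro: Inf_lower)
  with assms(2) show False by simp
qed

lemma emeasure_Icc_less_qinv:
  assumes "mono F" "continuous (at_right t) F" "0 \<le> t"
  shows "emeasure lborel ({a..b} \<inter> {\<beta>. ennreal t < qinv F \<beta>}) = ennreal (b - max a (F t))"
proof (rule emeasure_lborel_eq_between)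
  show "{max a (F t)<..<b} \<subseteq> {a..b} \<inter> {\<beta>. ennreal t < qinv F \<beta>}"
    using less_qinv_if_less[OF assms] by auto
  show "{a..b} \<inter> {\<beta>. ennreal t < qinv F \<beta>} \<subseteq> {max a (F t)..b}"
    using le_if_less_qinv[OF assms(3)] by auto
  show "{a..b} \<inter> {\<beta>. ennreal t < qinv F \<beta>} \<in> sets lborel"
    by measurable
qed

lemma nn_integral_qinv_Icc:
  assumes "mono F" "\<And>t. 0 \<le> t \<Longrightarrow> continuous (at_right t) F"
  shows "(\<integral>\<^sup>+ \<beta>. indicator {a..b} \<beta> * qinv F \<beta> \<partial>lborel) =
    (\<integral>\<^sup>+ t. indicator {0..} t * ennreal (b - max a (F t)) \<partial>lborel)"
proof -
  define S where "S = {(t, \<beta>). 0 \<le> t \<and> a \<le> \<beta> \<and> \<beta> \<le> b \<and> ennreal t < qinv F \<beta>}"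
  have "S \<in> sets (lborel \<Otimes>\<^sub>M lborel)"
  proof -
    let ?Q = "{p \<in> space (lborel \<Otimes>\<^sub>M lborel). ennreal (fst p) < qinv F (snd p)}"
    have "?Q \<in> sets (lborel \<Otimes>\<^sub>M lborel)"
      by measurable
    moreover have "S = ({0..} \<times> {a..b}) \<inter> ?Q"
      by (auto simp: S_def space_pair_measure)
    ultimately show ?thesis by auto
  qed
  have inner_t: "(\<integral>\<^sup>+ t. indicator S (t, \<beta>) \<partial>lborel) = indicator {a..b} \<beta> * qinv F \<beta>"
    for \<beta>
  proof -
    have "indicator S (t, \<beta>) =
        (indicator {a..b} \<beta> * indicator {t. 0 \<le> t \<and> ennreal t < qinv F \<beta>} t :: ennreal)" for t
      by (auto simp: S_def indicator_def)
    moreover have "{t. 0 \<le> t \<and> ennreal t < qinv F \<beta>} \<in> sets lborel"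
      by measurable
    ultimately show ?thesis by (simp add: nn_integral_cmult emeasure_lborel_ennreal_less)
  qed
  have inner_\<beta>:
    "(\<integral>\<^sup>+ \<beta>. indicator S (t, \<beta>) \<partial>lborel) = indicator {0..} t * ennreal (b - max a (F t))" for t
  proof -
    have "indicator S (t, \<beta>) =
        (indicator {0..} t * indicator ({a..b} \<inter> {\<beta>. ennreal t < qinv F \<beta>}) \<beta> :: ennreal)" for \<beta>
      by (auto simp: S_def indicator_def)
    moreover have "{a..b} \<inter> {\<beta>. ennreal t < qinv F \<beta>} \<in> sets lborel"
      by measurable
    ultimately show ?thesis
      by (cases "0 \<le> t") (simp_all add: nn_integral_cmult emeasure_Icc_less_qinv assms)
  qed
  have "(\<integral>\<^sup>+ \<beta>. \<integral>\<^sup>+ t. indicator S (t, \<beta>) \<partial>lborel \<partial>lborel) =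
      (\<integral>\<^sup>+ t. \<integral>\<^sup>+ \<beta>. indicator S (t, \<beta>) \<partial>lborel \<partial>lborel)"
    using \<open>S \<in> sets (lborel \<Otimes>\<^sub>M lborel)\<close> by (intro lborel_pair.Fubini') simp
  then show ?thesis unfolding inner_t inner_\<beta> .
qed

lemma nn_integral_Icc_sublevel_qinv:
  fixes F :: "real \<Rightarrow> real" and G :: "real \<Rightarrow> ennreal"
  assumes "mono F" "\<And>z. 0 \<le> F z" and G[measurable]: "G \<in> borel_measurable borel"
  shows "(\<integral>\<^sup>+ z. indicator {0..} z * (\<integral>\<^sup>+ \<beta>. indicator {F z..b} \<beta> * G \<beta> \<partial>lborel) \<partial>lborel)
    = (\<integral>\<^sup>+ \<beta>. indicator {0..b} \<beta> * (G \<beta> * qinv F \<beta>) \<partial>lborel)"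
proof -
  have F[measurable]: "F \<in> borel_measurable borel" using borel_measurable_mono[OF assms(1)] .
  define S where "S = {(z, \<beta>). 0 \<le> z \<and> F z \<le> \<beta> \<and> \<beta> \<le> b}"
  have "S \<in> sets (lborel \<Otimes>\<^sub>M lborel)"
  proof -
    have "{p \<in> space (lborel \<Otimes>\<^sub>M lborel). 0 \<le> fst p \<and> F (fst p) \<le> snd p \<and> snd p \<le> b}
        \<in> sets (lborel \<Otimes>\<^sub>M lborel)"
      by measurable
    then show ?thesis by (simp add: S_def space_pair_measure case_prod_unfold)
  qed
  have "(\<integral>\<^sup>+ z. indicator {0..} z * (\<integral>\<^sup>+ \<beta>. indicator {F z..b} \<beta> * G \<beta> \<partial>lborel) \<partial>lborel)
      = (\<integral>\<^sup>+ z. \<integral>\<^sup>+ \<beta>. indicator S (z, \<beta>) * G \<beta> \<partial>lborel \<partial>lborel)"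
    by (intro nn_integral_cong) (auto simp: S_def indicator_def simp flip: nn_integral_cmult)
  also have "\<dots> = (\<integral>\<^sup>+ \<beta>. \<integral>\<^sup>+ z. indicator S (z, \<beta>) * G \<beta> \<partial>lborel \<partial>lborel)"
    using \<open>S \<in> sets (lborel \<Otimes>\<^sub>M lborel)\<close> by (intro lborel_pair.Fubini'[symmetric]) simp
  also have "\<dots> = (\<integral>\<^sup>+ \<beta>. indicator {0..b} \<beta> * (G \<beta> * qinv F \<beta>) \<partial>lborel)"
  proof (rule nn_integral_cong)
    fix \<beta>
    have "indicator S (z, \<beta>) * G \<beta> =
        indicator {0..b} \<beta> * G \<beta> * indicator {z. 0 \<le> z \<and> F z \<le> \<beta>} z" for z
      using assms(2)[of z] by (auto simp: S_def indicator_def)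
    moreover have "{z. 0 \<le> z \<and> F z \<le> \<beta>} \<in> sets lborel"
      by measurable
    ultimately show "(\<integral>\<^sup>+ z. indicator S (z, \<beta>) * G \<beta> \<partial>lborel) =
        indicator {0..b} \<beta> * (G \<beta> * qinv F \<beta>)"
      by (simp add: nn_integral_cmult emeasure_sublevel_eq_qinv assms(1) mult.assoc)
  qed
  finally show ?thesis .
qed

lemma continuous_at_right_measure_le_ennreal:
  assumes "finite_measure M" and g[measurable]: "g \<in> borel_measurable M"
  shows "continuous (at_right t) (\<lambda>y. measure M {x \<in> space M. g x \<le> ennreal y})"
  unfolding continuous_within
proof (rule tendsto_at_right_sequentially[where b = "t + 1"])
  fix S :: "nat \<Rightarrow> real" assume S: "decseq S" "S \<longlonglongrightarrow> t"
  have "(\<lambda>n. measure M {x \<in> space M. g x \<le> ennreal (S n)})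
      \<longlonglongrightarrow> measure M (\<Inter>n. {x \<in> space M. g x \<le> ennreal (S n)})"
    using S(1) by (intro finite_measure.finite_Lim_measure_decseq[OF assms(1)])
      (auto simp: decseq_def intro: order_trans[OF _ ennreal_leI])
  also have "(\<Inter>n. {x \<in> space M. g x \<le> ennreal (S n)}) = {x \<in> space M. g x \<le> ennreal t}"
    using decseq_ge[OF S] LIMSEQ_le_const[OF tendsto_ennrealI[OF S(2)]]
    by (auto intro: order_trans[OF _ ennreal_leI])
  finally show "(\<lambda>n. measure M {x \<in> space M. g x \<le> ennreal (S n)})
      \<longlonglongrightarrow> measure M {x \<in> space M. g x \<le> ennreal t}" .
qed simp

lemma mono_distF_rn: "finite_measure \<nu> \<Longrightarrow> mono (distF_rn \<nu> \<mu>)"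
  unfolding mono_def distF_rn_def
  by (auto intro!: finite_measure.finite_measure_mono intro: order_trans[OF _ ennreal_leI])

lemma continuous_at_right_distF_rn:
  "finite_measure \<nu> \<Longrightarrow> continuous (at_right t) (distF_rn \<nu> \<mu>)"
  unfolding distF_rn_def[abs_def]
  by (rule continuous_at_right_measure_le_ennreal) (simp_all add: borel_measurable_RN_deriv)

lemma mono_distF_fun:
  "finite_measure \<nu> \<Longrightarrow> f \<in> borel_measurable \<nu> \<Longrightarrow> mono (distF_fun \<nu> f)"
  unfolding mono_def distF_fun_def by (auto intro!: finite_measure.finite_measure_mono)

lemma measure_superlevel_eq_distF_fun:
  assumes "finite_measure \<nu>" "f \<in> borel_measurable \<nu>"
  shows "measure \<nu> {\<omega> \<in> space \<nu>. z < f \<omega>} = measure \<nu> (space \<nu>) - distF_fun \<nu> f z"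
proof -
  have "{\<omega> \<in> space \<nu>. z < f \<omega>} = space \<nu> - {\<omega> \<in> space \<nu>. f \<omega> \<le> z}" by auto
  then show ?thesis
    using assms by (simp add: distF_fun_def finite_measure.finite_measure_compl)
qed

theorem proposition17:
  fixes \<nu> \<mu> :: "'a measure" and f :: "'a \<Rightarrow> real"
  assumes "chain_generators \<nu> \<noteq> {}"
    and "finite_measure \<nu>" and "finite_measure \<mu>"
    and "sets \<mu> = sets \<nu>"
    and "absolutely_continuous \<nu> \<mu>"
    and "f \<in> borel_measurable \<nu>" and "\<forall>\<omega>\<in>space \<nu>. 0 \<le> f \<omega>"
  shows "v_fun \<nu> \<mu> f =
    (\<integral>\<^sup>+ \<beta>. indicator {0..measure \<nu> (space \<nu>)} \<beta> *
        (qinv (distF_rn \<nu> \<mu>) \<beta> * qinv (distF_fun \<nu> f) \<beta>) \<partial>lborel)"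
proof -
  let ?N = "measure \<nu> (space \<nu>)" and ?F\<^sub>\<mu> = "distF_rn \<nu> \<mu>" and ?F\<^sub>f = "distF_fun \<nu> f"
  have v_set_superlevel: "v_set \<nu> \<mu> {\<omega> \<in> space \<nu>. z < f \<omega>} =
      (\<integral>\<^sup>+ \<beta>. indicator {?F\<^sub>f z..?N} \<beta> * qinv ?F\<^sub>\<mu> \<beta> \<partial>lborel)" for z
  proof -
    have "min (?N - ?F\<^sub>\<mu> t) (?N - ?F\<^sub>f z) = ?N - max (?F\<^sub>f z) (?F\<^sub>\<mu> t)" for t
      by (simp add: min_def max_def)
    then show ?thesis
      using assms(2,6)
      by (simp add: v_set_def measure_superlevel_eq_distF_fun nn_integral_qinv_Icc
          mono_distF_rn continuous_at_right_distF_rn)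
  qed
  show ?thesis
    unfolding v_fun_def v_set_superlevel using assms(2,6)
    by (intro nn_integral_Icc_sublevel_qinv mono_distF_fun) (auto simp: distF_fun_def)
qed

end
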